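(* The semantics $\mathit{tfcf2}$ and $\mathit{tfstg2}$ satisfy the weak reinstatement criterion: for every argumentation framework $\mathcal{F}$ and every $S\in\mathit{tfcf2}(\mathcal{F})$ or $S\in\mathit{tfstg2}(\mathcal{F})$, $S$ contains the grounded extension of $\mathcal{F}$.
   Context: An argumentation framework (AF) is $\mathcal{F}=(A_{\mathcal{F}},R_{\mathcal{F}})$ with $R_{\mathcal{F}}\subseteq A_{\mathcal{F}}\times A_{\mathcal{F}}$ (possibly infinite); $a\rightarrow b$ means $(a,b)\in R_{\mathcal{F}}$. $S$ defends $a$ if every attacker of $a$ is attacked by some element of $S$; $f_{\mathcal{F}}(S)=\{x: S\text{ defends }x\}$. The grounded extension is the least fixed point of the monotone map $f_{\mathcal{F}}$. $\mathcal{F}|_B=(A_{\mathcal{F}}\cap B,R_{\mathcal{F}}\cap(B\times B))$. Conflict-free: no $a,b\in S$ with $a\rightarrow b$; naive: $\subseteq$-maximal conflict-free; $S^\oplus=S\cup\{x:\exists y\in S,\ y\rightarrow x\}$; stage: conflict-free $S$ with no conflict-free $T$ such that $S^\oplus\subsetneq T^\oplus$. $\mathrm{SCC}(a)$: set of $b$ with directed attack paths (possibly of length 0) from $a$ to $b$ and back. $D_S(X)=\{b\in X:\exists a\in S\setminus X,\ a\rightarrow b\}$. $C^0_S(a)=\mathrm{SCC}(a)$; $C^{\alpha+1}_S(a)$ = component of $a$ in $\mathcal{F}|_{C^\alpha_S(a)\setminus D_S(C^\alpha_S(a))}$ (empty if $a$ not there); for limit $\lambda$, component of $a$ in $\mathcal{F}|_{\bigcap_{\alpha<\lambda}C^\alpha_S(a)}$;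 $\alpha_S(a)$ = least $\alpha$ with $a\notin C^\alpha_S(a)$ or $C^{\alpha+1}_S(a)=C^\alpha_S(a)$. $S\in\mathit{tfcf2}(\mathcal{F})$ (resp. $\mathit{tfstg2}(\mathcal{F})$) iff $S$ is conflict-free and for each $a\in A_{\mathcal{F}}$, $a\notin C^{\alpha_S(a)}_S(a)$ or $S\cap C^{\alpha_S(a)}_S(a)$ is a naive (resp. stage) extension of $\mathcal{F}|_{C^{\alpha_S(a)}_S(a)}$. *)

theory Defs
  imports Main
begin

definition is_AF :: "'a set \<Rightarrow> ('a \<times> 'a) set \<Rightarrow> bool" where
  "is_AF A R \<longleftrightarrow> R \<subseteq> A \<times> A"

definition defends :: "('a \<times> 'a) set \<Rightarrow> 'a set \<Rightarrow> 'a \<Rightarrow> bool" where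
  "defends R S x \<longleftrightarrow> (\<forall>b. (b, x) \<in> R \<longrightarrow> (\<exists>c\<in>S. (c, b) \<in> R))"

definition char_fun :: "'a set \<Rightarrow> ('a \<times> 'a) set \<Rightarrow> 'a set \<Rightarrow> 'a set" where
  "char_fun A R S = {x \<in> A. defends R S x}"

definition grounded :: "'a set \<Rightarrow> ('a \<times> 'a) set \<Rightarrow> 'a set" where
  "grounded A R = lfp (char_fun A R)"

definition restr_rel :: "('a \<times> 'a) set \<Rightarrow> 'a set \<Rightarrow> ('a \<times> 'a) set" where
  "restr_rel R B = R \<inter> (B \<times> B)"

definition conflict_free :: "('a \<times> 'a) set \<Rightarrow> 'a set \<Rightarrow> bool" where
  "conflict_free R S \<longleftrightarrow> (\<forall>a\<in>S. \<forall>b\<in>S. (a, b) \<notin> R)"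

definition naive :: "'a set \<Rightarrow> ('a \<times> 'a) set \<Rightarrow> 'a set \<Rightarrow> bool" where
  "naive A R S \<longleftrightarrow> S \<subseteq> A \<and> conflict_free R S \<and>
     (\<forall>T. S \<subset> T \<and> T \<subseteq> A \<longrightarrow> \<not> conflict_free R T)"

definition range_plus :: "('a \<times> 'a) set \<Rightarrow> 'a set \<Rightarrow> 'a set" where
  "range_plus R S = S \<union> {x. \<exists>y\<in>S. (y, x) \<in> R}"

definition stage :: "'a set \<Rightarrow> ('a \<times> 'a) set \<Rightarrow> 'a set \<Rightarrow> bool" where
  "stage A R S \<longleftrightarrow> S \<subseteq> A \<and> conflict_free R S \<and>
     \<not> (\<exists>T. T \<subseteq> A \<and> conflict_free R T \<and> range_plus R S \<subset> range_plus R T)"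

text \<open>The (strongly connected) component of a in F|_X (empty if a is not an argument of F|_X).
  For X = UNIV this is SCC(a) in F.\<close>
definition comp :: "'a set \<Rightarrow> ('a \<times> 'a) set \<Rightarrow> 'a set \<Rightarrow> 'a \<Rightarrow> 'a set" where
  "comp A R X a = (if a \<in> A \<inter> X then
      {b. (a, b) \<in> (restr_rel R X)\<^sup>* \<and> (b, a) \<in> (restr_rel R X)\<^sup>*} else {})"

definition D_set :: "('a \<times> 'a) set \<Rightarrow> 'a set \<Rightarrow> 'a set \<Rightarrow> 'a set" where
  "D_set R S X = {b \<in> X. \<exists>a\<in>S - X. (a, b) \<in> R}"

definition C_step :: "'a set \<Rightarrow> ('a \<times> 'a) set \<Rightarrow> 'a set \<Rightarrow> 'a \<Rightarrow> 'a set \<Rightarrow> 'a set" where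
  "C_step A R S a X = comp A R (X - D_set R S X) a"

text \<open>The transfinite sequence C^alpha_S(a), alpha an ordinal, represented as the set of
  its members: the least set closed under the successor step and under taking the component
  of a in the intersection of any chain of members (limit step; the empty chain gives
  C^0 = SCC(a)).\<close>
inductive_set C_stages :: "'a set \<Rightarrow> ('a \<times> 'a) set \<Rightarrow> 'a set \<Rightarrow> 'a \<Rightarrow> 'a set set"
  for A R S a where
  base: "comp A R UNIV a \<in> C_stages A R S a"
| succ: "X \<in> C_stages A R S a \<Longrightarrow> C_step A R S a X \<in> C_stages A R S a"
| lim: "\<forall>X\<in>M. X \<in> C_stages A R S a \<Longrightarrow> Complete_Partial_Order.chain (\<subseteq>) M
          \<Longrightarrow> comp A R (\<Inter>M) a \<in> C_stages A R S a"

text \<open>C^{alpha_S(a)}_S(a): the first member of the sequence that is fixed by the successor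
  step (if a is not in a member, the step yields the empty set, which is fixed).\<close>
definition C_final :: "'a set \<Rightarrow> ('a \<times> 'a) set \<Rightarrow> 'a set \<Rightarrow> 'a \<Rightarrow> 'a set" where
  "C_final A R S a = (THE X. X \<in> C_stages A R S a \<and> C_step A R S a X = X)"

definition tfcf2 :: "'a set \<Rightarrow> ('a \<times> 'a) set \<Rightarrow> 'a set set" where
  "tfcf2 A R = {S. S \<subseteq> A \<and> conflict_free R S \<and>
     (\<forall>a\<in>A. a \<notin> C_final A R S a \<or>
        naive (A \<inter> C_final A R S a) (restr_rel R (C_final A R S a)) (S \<inter> C_final A R S a))}"

definition tfstg2 :: "'a set \<Rightarrow> ('a \<times> 'a) set \<Rightarrow> 'a set set" where
  "tfstg2 A R = {S. S \<subseteq> A \<and> conflict_free R S \<and>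
     (\<forall>a\<in>A. a \<notin> C_final A R S a \<or>
        stage (A \<inter> C_final A R S a) (restr_rel R (C_final A R S a)) (S \<inter> C_final A R S a))}"

end

theory Submission
  imports Defs
begin

text \<open>Induction along the least fixed point: every argument x of the grounded extension is
  in S and its final component is {x}. Such an x is defended by grounded arguments, which lie
  in S; as S is conflict-free, no argument of S attacks x, so x survives every reduction step
  and lies in its final component C. Any attacker y of x inside C is counter-attacked by a
  grounded c \<in> S, and c must lie in C (otherwise y would be in D_S(C)); but then C is
  contained in the final component {c} of c, forcing x = y = c, a self-attack. Hence
  C = {x}, and since x does not attack itself, the only naive or stage extension of the
  one-argument framework on {x} is {x}, so x \<in> S.\<close>

lemma rtrancl_Restr_strongly_connected:
  assumes "(a, b) \<in> r\<^sup>*" and "(b, a) \<in> r\<^sup>*"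
  defines "Y \<equiv> {z. (a, z) \<in> r\<^sup>* \<and> (z, a) \<in> r\<^sup>*}"
  shows "(a, b) \<in> (Restr r Y)\<^sup>*"
proof -
  have "(b, a) \<in> r\<^sup>* \<longrightarrow> (a, b) \<in> (Restr r Y)\<^sup>*"
    using assms(1)
  proof (induction rule: rtrancl_induct)
    case (step u v)
    show ?case
    proof
      assume "(v, a) \<in> r\<^sup>*"
      with step.hyps(2) have "(u, a) \<in> r\<^sup>*"
        by (rule converse_rtrancl_into_rtrancl)
      moreover have "(a, v) \<in> r\<^sup>*"
        using step.hyps by (rule rtrancl_into_rtrancl)
      ultimately have "(u, v) \<in> Restr r Y"
        using step.hyps \<open>(v, a) \<in> r\<^sup>*\<close> by (auto simp: Y_def)
      with step.IH \<open>(u, a) \<in> r\<^sup>*\<close> show "(a, v) \<in> (Restr r Y)\<^sup>*"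
        by (meson rtrancl_into_rtrancl)
    qed
  qed simp
  with assms(2) show ?thesis by blast
qed

lemma comp_subset: "comp A R W a \<subseteq> W"
proof
  fix b assume "b \<in> comp A R W a"
  then have "(b, a) \<in> (restr_rel R W)\<^sup>*" and "a \<in> W"
    by (auto simp: comp_def split: if_splits)
  then show "b \<in> W"
    by (cases rule: converse_rtranclE) (auto simp: restr_rel_def)
qed

lemma comp_subset_arguments:
  assumes "is_AF A R"
  shows "comp A R W a \<subseteq> A"
proof
  fix b assume "b \<in> comp A R W a"
  then have "(b, a) \<in> (restr_rel R W)\<^sup>*" and "a \<in> A"
    by (auto simp: comp_def split: if_splits)
  then show "b \<in> A"
    using assms by (cases rule: converse_rtranclE) (auto simp: restr_rel_def is_AF_def)
qed

lemma comp_strongly_connected: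
  assumes "b \<in> comp A R W a"
  shows "(a, b) \<in> (restr_rel R (comp A R W a))\<^sup>*"
    and "(b, a) \<in> (restr_rel R (comp A R W a))\<^sup>*"
proof -
  let ?r = "restr_rel R W" and ?C = "comp A R W a"
  have "a \<in> A \<inter> W"
    using assms by (auto simp: comp_def split: if_splits)
  then have C: "?C = {z. (a, z) \<in> ?r\<^sup>* \<and> (z, a) \<in> ?r\<^sup>*}"
    by (simp add: comp_def)
  then have ab: "(a, b) \<in> ?r\<^sup>*" and ba: "(b, a) \<in> ?r\<^sup>*"
    using assms by auto
  then have C': "?C = {z. (b, z) \<in> ?r\<^sup>* \<and> (z, b) \<in> ?r\<^sup>*}"
    unfolding C by (blast intro: rtrancl_trans)
  have restr: "restr_rel R ?C = Restr ?r ?C"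
    using comp_subset[of A R W a] by (auto simp: restr_rel_def)
  show "(a, b) \<in> (restr_rel R ?C)\<^sup>*"
    using rtrancl_Restr_strongly_connected[OF ab ba] by (simp only: restr flip: C)
  show "(b, a) \<in> (restr_rel R ?C)\<^sup>*"
    using rtrancl_Restr_strongly_connected[OF ba ab] by (simp only: restr flip: C')
qed

lemma comp_subset_comp:
  assumes "is_AF A R" and c: "c \<in> comp A R W a" and sub: "comp A R W a \<subseteq> V"
  shows "comp A R W a \<subseteq> comp A R V c"
proof
  let ?Y = "comp A R W a"
  fix b assume b: "b \<in> ?Y"
  have "c \<in> A \<inter> V"
    using comp_subset_arguments[OF assms(1)] c sub by blast
  moreover have "(restr_rel R ?Y)\<^sup>* \<subseteq> (restr_rel R V)\<^sup>*"
    using sub by (intro rtrancl_mono) (auto simp: restr_rel_def)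
  moreover have "(c, b) \<in> (restr_rel R ?Y)\<^sup>*" "(b, c) \<in> (restr_rel R ?Y)\<^sup>*"
    using comp_strongly_connected[OF c] comp_strongly_connected[OF b]
    by (meson rtrancl_trans)+
  ultimately show "b \<in> comp A R V c"
    by (auto simp: comp_def)
qed

lemma C_step_subset: "C_step A R S a X \<subseteq> X"
  using comp_subset[of A R "X - D_set R S X" a] unfolding C_step_def by blast

lemma C_stages_comp:
  assumes "X \<in> C_stages A R S a"
  obtains W where "X = comp A R W a"
  using assms by cases (simp_all add: C_step_def that)

lemma C_stages_nonempty_mem:
  assumes "X \<in> C_stages A R S a" and "X \<noteq> {}"
  shows "a \<in> X"
  using assms by (elim C_stages_comp) (auto simp: comp_def split: if_splits)

lemma fixed_stage_subset_stages:
  assumes AF: "is_AF A R"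
    and Y: "Y \<in> C_stages A R S a" and fixed: "C_step A R S a Y = Y" and c: "c \<in> Y"
    and Z: "Z \<in> C_stages A R S c"
  shows "Y \<subseteq> Z"
proof -
  obtain W where YW: "Y = comp A R W a"
    using Y by (rule C_stages_comp)
  have absorb: "Y \<subseteq> comp A R V c" if "Y \<subseteq> V" for V
    using comp_subset_comp[OF AF, of c W a V] c that unfolding YW .
  have "C_step A R S a Y \<subseteq> Y - D_set R S Y"
    unfolding C_step_def by (rule comp_subset)
  then have YD: "Y \<subseteq> Y - D_set R S Y"
    unfolding fixed .
  from Z show ?thesis
  proof induction
    case base
    show ?case by (rule absorb) simp
  next
    case (succ X)
    have "Y - D_set R S Y \<subseteq> X - D_set R S X"
      using succ.IH by (auto simp: D_set_def)
    with YD have "Y \<subseteq> X - D_set R S X"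
      by (rule subset_trans)
    then show ?case
      unfolding C_step_def by (rule absorb)
  next
    case (lim M)
    then have "Y \<subseteq> \<Inter>M"
      by blast
    then show ?case
      by (rule absorb)
  qed
qed

lemma fixed_stage_exists:
  obtains Y where "Y \<in> C_stages A R S a" and "C_step A R S a Y = Y"
proof -
  let ?T = "C_stages A R S a"
  obtain M where M: "subset.maxchain ?T M"
    using subset.Hausdorff by blast
  then have Mc: "subset.chain ?T M"
    by (simp add: subset.maxchain_def)
  then have MT: "M \<subseteq> ?T"
    by (simp add: subset.chain_def)
  have mem_M: "X \<in> M" if "X \<in> ?T" and "\<forall>Z\<in>M. X \<subseteq> Z" for X
  proof (rule ccontr)
    assume "X \<notin> M"
    then have "M \<subset> insert X M" by auto
    moreover have "subset.chain ?T (insert X M)"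
      using Mc that unfolding subset.chain_def by auto
    ultimately show False
      using M by (auto simp: subset.maxchain_def)
  qed
  let ?L = "comp A R (\<Inter>M) a"
  have "Complete_Partial_Order.chain (\<subseteq>) M"
    using Mc unfolding subset.chain_def Complete_Partial_Order.chain_def by auto
  then have L: "?L \<in> ?T"
    using MT by (intro C_stages.lim) auto
  have L_least: "\<forall>Z\<in>M. ?L \<subseteq> Z"
    using comp_subset[of A R "\<Inter>M" a] by blast
  txt \<open>The component at the meet of a maximal chain is the least element of the chain, so
    its successor, being even smaller, must coincide with it.\<close>
  have step_L: "C_step A R S a ?L \<subseteq> ?L"
    by (rule C_step_subset)
  then have "C_step A R S a ?L \<in> M"
    using mem_M[OF C_stages.succ[OF L]] L_least by blast
  with L_least have "?L \<subseteq> C_step A R S a ?L" ..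
  with step_L have "C_step A R S a ?L = ?L" ..
  with L show ?thesis by (rule that)
qed

lemma fixed_stage_unique:
  assumes "is_AF A R"
  shows "\<exists>!Y. Y \<in> C_stages A R S a \<and> C_step A R S a Y = Y"
proof -
  have least: "Y \<subseteq> Z" if "Y \<in> C_stages A R S a" "C_step A R S a Y = Y"
    and "Z \<in> C_stages A R S a" for Y Z
  proof (cases "Y = {}")
    case False
    then show ?thesis
      using fixed_stage_subset_stages[OF assms that(1,2) _ that(3)]
        C_stages_nonempty_mem[OF that(1)] by simp
  qed simp
  obtain Y where "Y \<in> C_stages A R S a" "C_step A R S a Y = Y"
    by (rule fixed_stage_exists)
  then show ?thesis
    using least by (blast intro: subset_antisym)
qed

lemma C_final_in_stages:
  assumes "is_AF A R"
  shows "C_final A R S a \<in> C_stages A R S a"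
    and "C_step A R S a (C_final A R S a) = C_final A R S a"
  using theI'[OF fixed_stage_unique[OF assms]] unfolding C_final_def by blast+

lemma D_set_C_final:
  assumes "is_AF A R"
  shows "D_set R S (C_final A R S a) = {}"
proof -
  let ?C = "C_final A R S a"
  have "C_step A R S a ?C \<subseteq> ?C - D_set R S ?C"
    unfolding C_step_def by (rule comp_subset)
  then have "?C \<subseteq> ?C - D_set R S ?C"
    unfolding C_final_in_stages(2)[OF assms] .
  then show ?thesis
    by (auto simp: D_set_def)
qed

lemma C_final_subset_C_final:
  assumes "is_AF A R" and "c \<in> C_final A R S a"
  shows "C_final A R S a \<subseteq> C_final A R S c"
  using fixed_stage_subset_stages[OF assms(1) C_final_in_stages[OF assms(1)] assms(2)
      C_final_in_stages(1)[OF assms(1)]] .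

lemma C_final_path:
  assumes "is_AF A R" and "b \<in> C_final A R S a"
  shows "(b, a) \<in> (restr_rel R (C_final A R S a))\<^sup>*"
proof -
  obtain W where "C_final A R S a = comp A R W a"
    using C_final_in_stages(1)[OF assms(1)] by (rule C_stages_comp)
  then show ?thesis
    using comp_strongly_connected(2) assms(2) by metis
qed

lemma mem_C_final_if_unattacked:
  assumes "is_AF A R" and "x \<in> A" and "\<forall>s\<in>S. (s, x) \<notin> R"
  shows "x \<in> C_final A R S x"
proof -
  have "x \<in> X" if "X \<in> C_stages A R S x" for X
    using that
  proof induction
    case (succ X)
    have "x \<notin> D_set R S X"
      using assms(3) by (auto simp: D_set_def)
    with succ show ?case
      using assms(2) by (simp add: C_step_def comp_def)
  qed (use assms(2) in \<open>simp_all add: comp_def\<close>)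
  then show ?thesis
    using C_final_in_stages(1)[OF assms(1)] by blast
qed

lemma C_final_eq_singleton:
  assumes AF: "is_AF A R" and x: "x \<in> C_final A R S x" and no_loop: "(x, x) \<notin> R"
    and counter:
      "\<And>y. (y, x) \<in> R \<Longrightarrow> \<exists>c\<in>S. (c, y) \<in> R \<and> C_final A R S c = {c}"
  shows "C_final A R S x = {x}"
proof (rule ccontr)
  let ?C = "C_final A R S x"
  assume "?C \<noteq> {x}"
  with x obtain b where "b \<in> ?C" "b \<noteq> x" by blast
  then have "(b, x) \<in> (restr_rel R ?C)\<^sup>+"
    using C_final_path[OF AF, of b S x] by (simp add: rtrancl_eq_or_trancl)
  then obtain y where "(y, x) \<in> restr_rel R ?C"
    by (cases rule: tranclE) blast+
  then have y: "y \<in> ?C" "(y, x) \<in> R"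
    by (auto simp: restr_rel_def)
  then obtain c where c: "c \<in> S" "(c, y) \<in> R" "C_final A R S c = {c}"
    using counter by blast
  have "c \<in> ?C"
    using D_set_C_final[OF AF, of S x] y c by (auto simp: D_set_def)
  then have "?C \<subseteq> {c}"
    using C_final_subset_C_final[OF AF, of c S x] c(3) by simp
  then show False
    using x y no_loop by auto
qed

lemma naive_singleton:
  assumes "naive {x} R T" and "(x, x) \<notin> R"
  shows "x \<in> T"
  using assms by (auto simp: naive_def conflict_free_def)

lemma stage_singleton:
  assumes "stage {x} R T" and "(x, x) \<notin> R"
  shows "x \<in> T"
proof (rule ccontr)
  assume "x \<notin> T"
  with assms(1) have "T = {}"
    unfolding stage_def by blast
  then have "range_plus R T = {}"
    by (simp add: range_plus_def)
  moreover have "x \<in> range_plus R {x}" and "conflict_free R {x}"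
    using assms(2) by (auto simp: range_plus_def conflict_free_def)
  ultimately show False
    using assms(1) unfolding stage_def by blast
qed

lemma mem_if_C_final_singleton:
  assumes "S \<in> tfcf2 A R \<or> S \<in> tfstg2 A R"
    and "x \<in> A" and "C_final A R S x = {x}" and "(x, x) \<notin> R"
  shows "x \<in> S"
proof -
  have A: "A \<inter> {x} = {x}" and R: "(x, x) \<notin> restr_rel R {x}"
    using assms(2,4) by (auto simp: restr_rel_def)
  from assms(1) show ?thesis
  proof
    assume "S \<in> tfcf2 A R"
    then have "x \<notin> C_final A R S x \<or> naive (A \<inter> C_final A R S x)
        (restr_rel R (C_final A R S x)) (S \<inter> C_final A R S x)"
      using assms(2) unfolding tfcf2_def by blast
    then have "naive {x} (restr_rel R {x}) (S \<inter> {x})"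
      unfolding assms(3) A by simp
    then show ?thesis
      using naive_singleton[OF _ R] by blast
  next
    assume "S \<in> tfstg2 A R"
    then have "x \<notin> C_final A R S x \<or> stage (A \<inter> C_final A R S x)
        (restr_rel R (C_final A R S x)) (S \<inter> C_final A R S x)"
      using assms(2) unfolding tfstg2_def by blast
    then have "stage {x} (restr_rel R {x}) (S \<inter> {x})"
      unfolding assms(3) A by simp
    then show ?thesis
      using stage_singleton[OF _ R] by blast
  qed
qed

lemma mono_char_fun: "mono (char_fun A R)"
  unfolding mono_def char_fun_def defends_def by blast

lemma grounded_induct [consumes 1, case_names defended]:
  assumes "x \<in> grounded A R"
    and defended:
      "\<And>x. x \<in> A \<Longrightarrow> defends R (grounded A R \<inter> {y. P y}) x \<Longrightarrow> P x"
  shows "P x"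
  using assms(1) unfolding grounded_def
proof (rule lfp_induct_set[OF _ mono_char_fun])
  fix y assume "y \<in> char_fun A R (lfp (char_fun A R) \<inter> {y. P y})"
  then show "P y"
    using defended by (simp add: char_fun_def grounded_def)
qed

lemma defended_mem_and_C_final_singleton:
  assumes AF: "is_AF A R" and S: "S \<in> tfcf2 A R \<or> S \<in> tfstg2 A R"
    and "x \<in> A" and defended: "defends R G x"
    and G: "\<And>c. c \<in> G \<Longrightarrow> c \<in> S \<and> C_final A R S c = {c}"
  shows "x \<in> S \<and> C_final A R S x = {x}"
proof -
  have "conflict_free R S"
    using S by (auto simp: tfcf2_def tfstg2_def)
  then have unattacked: "\<forall>s\<in>S. (s, x) \<notin> R"
    using defended G unfolding defends_def conflict_free_def by blast
  then have no_loop: "(x, x) \<notin> R"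
    using defended G unfolding defends_def by blast
  have "C_final A R S x = {x}"
  proof (rule C_final_eq_singleton[OF AF _ no_loop])
    show "x \<in> C_final A R S x"
      using mem_C_final_if_unattacked[OF AF \<open>x \<in> A\<close> unattacked] .
    show "\<exists>c\<in>S. (c, y) \<in> R \<and> C_final A R S c = {c}" if "(y, x) \<in> R" for y
      using defended G that unfolding defends_def by blast
  qed
  then show ?thesis
    using mem_if_C_final_singleton[OF S \<open>x \<in> A\<close> _ no_loop] by blast
qed

theorem theorem12:
  fixes A :: "'a set" and R :: "('a \<times> 'a) set" and S :: "'a set"
  assumes "is_AF A R"
    and "S \<in> tfcf2 A R \<or> S \<in> tfstg2 A R"
  shows "grounded A R \<subseteq> S"
proof
  fix x assume "x \<in> grounded A R"
  then have "x \<in> S \<and> C_final A R S x = {x}"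
  proof (induction rule: grounded_induct)
    case (defended x)
    show ?case
      by (rule defended_mem_and_C_final_singleton[OF assms defended]) blast
  qed
  then show "x \<in> S" ..
qed

end
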